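(* Let $\mathcal{T}_S,\mathcal{T}_B$ be propositional theories, $V_A$ a set of propositional variables, and let $\langle\mathcal{T}^l,\mathcal{T}^u\rangle$ be an $\alpha$-abstraction from $\mathcal{T}_S$ with respect to $\mathcal{T}_B$ over $V_A$ which is exact, i.e. $\mathcal{T}_B\models\mathcal{T}^l\equiv\mathcal{T}^u$. Then $\langle\mathcal{T}^l,\mathcal{T}^u\rangle$ is the tightest abstraction: $\mathcal{T}_B\models \mathcal{T}^l\equiv \mathrm{wsc}(\mathcal{T}_S;\mathcal{T}_B;V_A)$ and $\mathcal{T}_B\models \mathcal{T}^u\equiv \mathrm{snc}(\mathcal{T}_S;\mathcal{T}_B;V_A)$; in particular for every formula $C$ over $V_A$, $\mathcal{T}_B\models C\to\mathcal{T}_S$ iff $\mathcal{T}_B\models C\to\mathcal{T}^l$, and for every formula $D$ over $V_A$, $\mathcal{T}_B\models\mathcal{T}_S\to D$ iff $\mathcal{T}_B\models \mathcal{T}^u\to D$.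
   Context: Classical propositional logic. A theory is a finite set of propositional formulas, identified with the conjunction of its elements (the empty theory is identified with $\top$). A formula is "over" a set $W$ of propositional variables if all variables occurring in it belong to $W$. $\mathcal{T}\models B$ means every truth assignment to the variables involved that satisfies $\mathcal{T}$ also satisfies $B$. Propositional quantifiers are abbreviations: $\exists p\,B := B[p:=\bot]\lor B[p:=\top]$ and $\forall p\,B := B[p:=\bot]\land B[p:=\top]$; for a finite set $V=\{p_1,\dots,p_k\}$, $\exists V$ and $\forall V$ denote iterated quantifiers. For formulas $A,\mathcal{T}$ and a set $W$ of variables, let $V$ be the set of variables occurring in $A$ or $\mathcal{T}$ but not in $W$, and define $\mathrm{snc}(A;\mathcal{T};W):=\exists V(\mathcal{T}\land A)$ and $\mathrm{wsc}(A;\mathcal{T};W):=\forall V(\mathcal{T}\to A)$. An $\alpha$-abstraction from $\mathcal{T}_S$ with respect to $\mathcal{T}_B$ over $V_A$ is a pair $\langle\mathcal{T}^l,\mathcal{T}^u\rangle$ of theories over $V_A$ such that (a) for every formula $C$ over $V_A$: if $\mathcal{T}_B\models C\to\mathcal{T}^l$ then $\mathcal{T}_B\models C\to\mathcal{T}_S$; and (b) for every formula $D$ over $V_A$: if $\mathcal{T}_B\models \mathcal{T}^u\to D$ then $\mathcal{T}_B\models\mathcal{T}_S\to D$. *)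

theory Defs
  imports Main
begin

datatype 'v form =
    Var 'v | Bot | Top | Neg "'v form"
  | And "'v form" "'v form" | Or "'v form" "'v form"
  | Imp "'v form" "'v form" | Iff "'v form" "'v form"

fun eval :: "('v \<Rightarrow> bool) \<Rightarrow> 'v form \<Rightarrow> bool" where
  "eval s (Var p) = s p"
| "eval s Bot = False"
| "eval s Top = True"
| "eval s (Neg a) = (\<not> eval s a)"
| "eval s (And a b) = (eval s a \<and> eval s b)"
| "eval s (Or a b) = (eval s a \<or> eval s b)"
| "eval s (Imp a b) = (eval s a \<longrightarrow> eval s b)"
| "eval s (Iff a b) = (eval s a \<longleftrightarrow> eval s b)"

fun vars :: "'v form \<Rightarrow> 'v set" where
  "vars (Var p) = {p}"
| "vars Bot = {}"
| "vars Top = {}"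
| "vars (Neg a) = vars a"
| "vars (And a b) = vars a \<union> vars b"
| "vars (Or a b) = vars a \<union> vars b"
| "vars (Imp a b) = vars a \<union> vars b"
| "vars (Iff a b) = vars a \<union> vars b"

fun subst :: "'v form \<Rightarrow> 'v \<Rightarrow> 'v form \<Rightarrow> 'v form" where
  "subst (Var q) p c = (if q = p then c else Var q)"
| "subst Bot p c = Bot"
| "subst Top p c = Top"
| "subst (Neg a) p c = Neg (subst a p c)"
| "subst (And a b) p c = And (subst a p c) (subst b p c)"
| "subst (Or a b) p c = Or (subst a p c) (subst b p c)"
| "subst (Imp a b) p c = Imp (subst a p c) (subst b p c)"
| "subst (Iff a b) p c = Iff (subst a p c) (subst b p c)"

definition ex1 :: "'v \<Rightarrow> 'v form \<Rightarrow> 'v form" where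
  "ex1 p b = Or (subst b p Bot) (subst b p Top)"

definition all1 :: "'v \<Rightarrow> 'v form \<Rightarrow> 'v form" where
  "all1 p b = And (subst b p Bot) (subst b p Top)"

definition exs :: "'v::linorder set \<Rightarrow> 'v form \<Rightarrow> 'v form" where
  "exs V b = foldr ex1 (sorted_list_of_set V) b"

definition alls :: "'v::linorder set \<Rightarrow> 'v form \<Rightarrow> 'v form" where
  "alls V b = foldr all1 (sorted_list_of_set V) b"

text \<open>A theory is a finite collection of formulas, identified with their conjunction
  (the empty theory is Top).\<close>
type_synonym 'v thy = "'v form list"

definition conj :: "'v thy \<Rightarrow> 'v form" where
  "conj T = foldr And T Top"

definition entails :: "'v thy \<Rightarrow> 'v form \<Rightarrow> bool" where
  "entails T b \<longleftrightarrow> (\<forall>s. eval s (conj T) \<longrightarrow> eval s b)"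

definition over :: "'v form \<Rightarrow> 'v set \<Rightarrow> bool" where
  "over a W \<longleftrightarrow> vars a \<subseteq> W"

definition theory_over :: "'v thy \<Rightarrow> 'v set \<Rightarrow> bool" where
  "theory_over T W \<longleftrightarrow> (\<forall>a\<in>set T. over a W)"

definition snc :: "'v::linorder form \<Rightarrow> 'v form \<Rightarrow> 'v set \<Rightarrow> 'v form" where
  "snc A T W = exs ((vars A \<union> vars T) - W) (And T A)"

definition wsc :: "'v::linorder form \<Rightarrow> 'v form \<Rightarrow> 'v set \<Rightarrow> 'v form" where
  "wsc A T W = alls ((vars A \<union> vars T) - W) (Imp T A)"

definition alpha_abstraction ::
  "'v thy \<Rightarrow> 'v thy \<Rightarrow> 'v set \<Rightarrow> 'v thy \<Rightarrow> 'v thy \<Rightarrow> bool" where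
  "alpha_abstraction TS TB VA Tl Tu \<longleftrightarrow>
     theory_over Tl VA \<and> theory_over Tu VA \<and>
     (\<forall>C. over C VA \<longrightarrow> entails TB (Imp C (conj Tl)) \<longrightarrow> entails TB (Imp C (conj TS))) \<and>
     (\<forall>D. over D VA \<longrightarrow> entails TB (Imp (conj Tu) D) \<longrightarrow> entails TB (Imp (conj TS) D))"

end

theory Submission
  imports Defs
begin

text \<open>An exact abstraction squeezes \<open>TS\<close> between \<open>Tl\<close> and \<open>Tu\<close> (take \<open>C = Tl\<close> and
  \<open>D = Tu\<close> in the defining conditions), so modulo \<open>TB\<close> the theory \<open>TS\<close> is equivalent to
  a formula over \<open>VA\<close>. For such a formula, quantifying away the variables outside \<open>VA\<close>
  changes nothing: both the weakest sufficient and the strongest necessary condition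
  collapse to it.\<close>

lemma eval_subst: "eval s (subst b p c) = eval (s(p := eval s c)) b"
  by (induction b) auto

lemma eval_ex1: "eval s (ex1 p b) = (\<exists>x. eval (s(p := x)) b)"
  by (simp add: ex1_def eval_subst ex_bool_eq disj_commute)

lemma eval_all1: "eval s (all1 p b) = (\<forall>x. eval (s(p := x)) b)"
  by (simp add: all1_def eval_subst all_bool_eq conj_commute)

lemma eval_cong: "(\<And>p. p \<in> vars a \<Longrightarrow> s p = t p) \<Longrightarrow> eval s a = eval t a"
  by (induction a) auto

lemma finite_vars: "finite (vars a)"
  by (induction a) auto

lemma over_conj: "theory_over T W \<Longrightarrow> over (conj T) W"
  unfolding theory_over_def over_def conj_def by (induction T) auto

lemma eval_foldr_ex1:
  "eval s (foldr ex1 ps b) \<longleftrightarrow> (\<exists>t. (\<forall>q. q \<notin> set ps \<longrightarrow> t q = s q) \<and> eval t b)"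
proof (induction ps arbitrary: s)
  case Nil
  have "(\<forall>q. q \<notin> set [] \<longrightarrow> t q = s q) \<longleftrightarrow> t = s" for t
    by (auto simp: fun_eq_iff)
  then show ?case by (simp only: foldr_Nil id_apply) blast
next
  case (Cons p ps)
  have "(\<exists>x t. (\<forall>q. q \<notin> set ps \<longrightarrow> t q = (s(p := x)) q) \<and> eval t b)
      \<longleftrightarrow> (\<exists>t. (\<forall>q. q \<notin> set (p # ps) \<longrightarrow> t q = s q) \<and> eval t b)"
  proof
    assume "\<exists>x t. (\<forall>q. q \<notin> set ps \<longrightarrow> t q = (s(p := x)) q) \<and> eval t b"
    then obtain x t where agree: "\<forall>q. q \<notin> set ps \<longrightarrow> t q = (s(p := x)) q" and "eval t b"
      by blast
    have "\<forall>q. q \<notin> set (p # ps) \<longrightarrow> t q = s q"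
    proof (intro allI impI)
      fix q assume "q \<notin> set (p # ps)"
      with agree show "t q = s q" by simp
    qed
    with \<open>eval t b\<close> show "\<exists>t. (\<forall>q. q \<notin> set (p # ps) \<longrightarrow> t q = s q) \<and> eval t b"
      by blast
  next
    assume "\<exists>t. (\<forall>q. q \<notin> set (p # ps) \<longrightarrow> t q = s q) \<and> eval t b"
    then obtain t where "\<forall>q. q \<notin> set (p # ps) \<longrightarrow> t q = s q" "eval t b" by blast
    then show "\<exists>x t. (\<forall>q. q \<notin> set ps \<longrightarrow> t q = (s(p := x)) q) \<and> eval t b"
      by (intro exI[of _ "t p"] exI[of _ t]) auto
  qed
  then show ?case by (simp only: foldr_Cons o_apply eval_ex1 Cons.IH)
qed

lemma eval_foldr_all1:
  "eval s (foldr all1 ps b) \<longleftrightarrow> (\<forall>t. (\<forall>q. q \<notin> set ps \<longrightarrow> t q = s q) \<longrightarrow> eval t b)"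
proof (induction ps arbitrary: s)
  case Nil
  have "(\<forall>q. q \<notin> set [] \<longrightarrow> t q = s q) \<longleftrightarrow> t = s" for t
    by (auto simp: fun_eq_iff)
  then show ?case by (simp only: foldr_Nil id_apply) blast
next
  case (Cons p ps)
  have "(\<forall>x t. (\<forall>q. q \<notin> set ps \<longrightarrow> t q = (s(p := x)) q) \<longrightarrow> eval t b)
      \<longleftrightarrow> (\<forall>t. (\<forall>q. q \<notin> set (p # ps) \<longrightarrow> t q = s q) \<longrightarrow> eval t b)"
  proof
    assume all: "\<forall>x t. (\<forall>q. q \<notin> set ps \<longrightarrow> t q = (s(p := x)) q) \<longrightarrow> eval t b"
    show "\<forall>t. (\<forall>q. q \<notin> set (p # ps) \<longrightarrow> t q = s q) \<longrightarrow> eval t b"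
    proof (intro allI impI)
      fix t assume "\<forall>q. q \<notin> set (p # ps) \<longrightarrow> t q = s q"
      then have "\<forall>q. q \<notin> set ps \<longrightarrow> t q = (s(p := t p)) q" by auto
      with all show "eval t b" by blast
    qed
  qed auto
  then show ?case by (simp only: foldr_Cons o_apply eval_all1 Cons.IH)
qed

lemma eval_exs:
  "finite V \<Longrightarrow> eval s (exs V b) \<longleftrightarrow> (\<exists>t. (\<forall>q. q \<notin> V \<longrightarrow> t q = s q) \<and> eval t b)"
  by (simp add: exs_def eval_foldr_ex1)

lemma eval_alls:
  "finite V \<Longrightarrow> eval s (alls V b) \<longleftrightarrow> (\<forall>t. (\<forall>q. q \<notin> V \<longrightarrow> t q = s q) \<longrightarrow> eval t b)"
  by (simp add: alls_def eval_foldr_all1)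

lemma entails_Iff:
  "entails T (Iff a b) \<longleftrightarrow> (\<forall>s. eval s (conj T) \<longrightarrow> eval s a = eval s b)"
  by (simp add: entails_def)

lemma entails_Imp_refl: "entails T (Imp a a)"
  by (simp add: entails_def)

lemma alpha_abstraction_lower_imp:
  "alpha_abstraction TS TB VA Tl Tu \<Longrightarrow> entails TB (Imp (conj Tl) (conj TS))"
  unfolding alpha_abstraction_def using over_conj entails_Imp_refl by blast

lemma alpha_abstraction_imp_upper:
  "alpha_abstraction TS TB VA Tl Tu \<Longrightarrow> entails TB (Imp (conj TS) (conj Tu))"
  unfolding alpha_abstraction_def using over_conj entails_Imp_refl by blast

lemma exact_alpha_abstraction_equiv:
  assumes "alpha_abstraction TS TB VA Tl Tu" and "entails TB (Iff (conj Tl) (conj Tu))"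
  shows "entails TB (Iff (conj Tl) (conj TS))" and "entails TB (Iff (conj Tu) (conj TS))"
  using assms alpha_abstraction_lower_imp[OF assms(1)] alpha_abstraction_imp_upper[OF assms(1)]
  by (auto simp: entails_def)

lemma eval_eq_if_agree_on_over:
  assumes "over F W" and "\<forall>q. q \<notin> V - W \<longrightarrow> t q = s q"
  shows "eval t F = eval s F"
  using assms by (intro eval_cong) (auto simp: over_def)

lemma wsc_eq_equiv_over:
  assumes equiv: "entails TB (Iff F A)" and F: "over F W"
  shows "entails TB (Iff F (wsc A (conj TB) W))"
  unfolding entails_Iff
proof (intro allI impI)
  define V where "V = (vars A \<union> vars (conj TB)) - W"
  have fin: "finite V" unfolding V_def using finite_vars by auto
  have equiv': "eval t F = eval t A" if "eval t (conj TB)" for t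
    using equiv that unfolding entails_Iff by blast
  fix s assume B: "eval s (conj TB)"
  have "eval s F \<longleftrightarrow> (\<forall>t. (\<forall>q. q \<notin> V \<longrightarrow> t q = s q) \<longrightarrow> eval t (Imp (conj TB) A))"
  proof
    assume "eval s F"
    show "\<forall>t. (\<forall>q. q \<notin> V \<longrightarrow> t q = s q) \<longrightarrow> eval t (Imp (conj TB) A)"
    proof (intro allI impI)
      fix t assume "\<forall>q. q \<notin> V \<longrightarrow> t q = s q"
      with \<open>eval s F\<close> have "eval t F"
        using eval_eq_if_agree_on_over[OF F, of "vars A \<union> vars (conj TB)" t s]
        unfolding V_def by blast
      then show "eval t (Imp (conj TB) A)" using equiv'[of t] by simp
    qed
  next
    assume "\<forall>t. (\<forall>q. q \<notin> V \<longrightarrow> t q = s q) \<longrightarrow> eval t (Imp (conj TB) A)"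
    then have "eval s (Imp (conj TB) A)" by blast
    with B show "eval s F" using equiv'[of s] by simp
  qed
  then show "eval s F = eval s (wsc A (conj TB) W)"
    unfolding wsc_def V_def[symmetric] eval_alls[OF fin] .
qed

lemma snc_eq_equiv_over:
  assumes equiv: "entails TB (Iff F A)" and F: "over F W"
  shows "entails TB (Iff F (snc A (conj TB) W))"
  unfolding entails_Iff
proof (intro allI impI)
  define V where "V = (vars A \<union> vars (conj TB)) - W"
  have fin: "finite V" unfolding V_def using finite_vars by auto
  have equiv': "eval t F = eval t A" if "eval t (conj TB)" for t
    using equiv that unfolding entails_Iff by blast
  fix s assume B: "eval s (conj TB)"
  have "eval s F \<longleftrightarrow> (\<exists>t. (\<forall>q. q \<notin> V \<longrightarrow> t q = s q) \<and> eval t (And (conj TB) A))"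
  proof
    assume "eval s F"
    with B have "eval s (And (conj TB) A)" using equiv'[of s] by simp
    then show "\<exists>t. (\<forall>q. q \<notin> V \<longrightarrow> t q = s q) \<and> eval t (And (conj TB) A)" by blast
  next
    assume "\<exists>t. (\<forall>q. q \<notin> V \<longrightarrow> t q = s q) \<and> eval t (And (conj TB) A)"
    then obtain t where "\<forall>q. q \<notin> V \<longrightarrow> t q = s q" "eval t (And (conj TB) A)" by blast
    then show "eval s F"
      using eval_eq_if_agree_on_over[OF F, of "vars A \<union> vars (conj TB)" t s] equiv'[of t]
      unfolding V_def by simp
  qed
  then show "eval s F = eval s (snc A (conj TB) W)"
    unfolding snc_def V_def[symmetric] eval_exs[OF fin] .
qed

theorem mainTheorem4:
  fixes TS TB Tl Tu :: "'v::linorder thy" and VA :: "'v set"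
  assumes "alpha_abstraction TS TB VA Tl Tu"
    and "entails TB (Iff (conj Tl) (conj Tu))"
  shows "entails TB (Iff (conj Tl) (wsc (conj TS) (conj TB) VA))
       \<and> entails TB (Iff (conj Tu) (snc (conj TS) (conj TB) VA))
       \<and> (\<forall>C. over C VA \<longrightarrow>
              (entails TB (Imp C (conj TS)) \<longleftrightarrow> entails TB (Imp C (conj Tl))))
       \<and> (\<forall>D. over D VA \<longrightarrow>
              (entails TB (Imp (conj TS) D) \<longleftrightarrow> entails TB (Imp (conj Tu) D)))"
proof -
  have over_l: "over (conj Tl) VA" and over_u: "over (conj Tu) VA"
    using assms(1) over_conj unfolding alpha_abstraction_def by blast+
  note equiv_l = exact_alpha_abstraction_equiv(1)[OF assms]
  note equiv_u = exact_alpha_abstraction_equiv(2)[OF assms]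
  have "entails TB (Imp C (conj TS)) \<longleftrightarrow> entails TB (Imp C (conj Tl))" for C
    using equiv_l by (auto simp: entails_def)
  moreover have "entails TB (Imp (conj TS) D) \<longleftrightarrow> entails TB (Imp (conj Tu) D)" for D
    using equiv_u by (auto simp: entails_def)
  ultimately show ?thesis
    using wsc_eq_equiv_over[OF equiv_l over_l] snc_eq_equiv_over[OF equiv_u over_u] by blast
qed

end
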